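(* Let $n\ge 2$ and $c\ge1$ be integers, and let $e_{n,c}$ be the order of $b^{-n}a^{-n}(ab)^{n}$ in $M(R(2,n;c))$. If $G$ is any finite group of exponent $n$ that is nilpotent of class at most $c$, then the exponent of $M(G)$ divides $n\,e_{n,c}$.
   Context: $R(2,n)$ denotes the largest finite $2$-generator group of exponent $n$, and $R(2,n;c)$ denotes its largest quotient of nilpotency class at most $c$ (equivalently the largest $2$-generator group of exponent $n$ and class at most $c$). Write $R(2,n;c)=F/R$ with $F$ free on $a,b$. The Schur multiplier is given by Hopf's formula $M(G)=(R\cap F')/[F,R]$ for $G=F/R$, $F$ free; $b^{-n}a^{-n}(ab)^n[F,R]$ lies in $M(R(2,n;c))$. *)

theory Defs
  imports "HOL-Algebra.Algebra"
begin

text \<open>A letter (True, x) stands for the generator x, (False, x) for its inverse.\<close>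

definition fg_red1 :: "(bool \<times> 'x) list \<Rightarrow> (bool \<times> 'x) list \<Rightarrow> bool" where
  "fg_red1 u v \<longleftrightarrow> (\<exists>xs ys b x. u = xs @ [(b, x), (\<not> b, x)] @ ys \<and> v = xs @ ys)"

definition fg_class :: "(bool \<times> 'x) list \<Rightarrow> (bool \<times> 'x) list set" where
  "fg_class w = {v. equivclp fg_red1 w v}"

definition free_group :: "'x set \<Rightarrow> ((bool \<times> 'x) list set) monoid" where
  "free_group S = \<lparr> carrier = {fg_class w | w. snd ` set w \<subseteq> S},
     monoid.mult = (\<lambda>A B. fg_class ((SOME u. u \<in> A) @ (SOME v. v \<in> B))),
     one = fg_class [] \<rparr>"

definition fg_gen :: "'x \<Rightarrow> (bool \<times> 'x) list set" where
  "fg_gen x = fg_class [(True, x)]"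

definition word_eval :: "('g, 'm) monoid_scheme \<Rightarrow> ('x \<Rightarrow> 'g) \<Rightarrow> (bool \<times> 'x) list \<Rightarrow> 'g" where
  "word_eval G f w = foldr (\<lambda>(b, x) acc. (if b then f x else inv\<^bsub>G\<^esub> (f x)) \<otimes>\<^bsub>G\<^esub> acc) w \<one>\<^bsub>G\<^esub>"

definition free_lift :: "'x set \<Rightarrow> ('g, 'm) monoid_scheme \<Rightarrow> ('x \<Rightarrow> 'g) \<Rightarrow> (bool \<times> 'x) list set \<Rightarrow> 'g" where
  "free_lift S G f A = word_eval G f (SOME w. w \<in> A \<and> snd ` set w \<subseteq> S)"

definition comm_subgroup :: "('a, 'b) monoid_scheme \<Rightarrow> 'a set \<Rightarrow> 'a set \<Rightarrow> 'a set" where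
  "comm_subgroup G H K = generate G
     (\<Union>h \<in> H. \<Union>k \<in> K. {h \<otimes>\<^bsub>G\<^esub> k \<otimes>\<^bsub>G\<^esub> inv\<^bsub>G\<^esub> h \<otimes>\<^bsub>G\<^esub> inv\<^bsub>G\<^esub> k})"

text \<open>lower_central G i is gamma_(i+1)(G): gamma_1 = G, gamma_(i+1) = [gamma_i, G].\<close>
fun lower_central :: "('a, 'b) monoid_scheme \<Rightarrow> nat \<Rightarrow> 'a set" where
  "lower_central G 0 = carrier G"
| "lower_central G (Suc i) = comm_subgroup G (lower_central G i) (carrier G)"

definition nilpotent_class_le :: "('a, 'b) monoid_scheme \<Rightarrow> nat \<Rightarrow> bool" where
  "nilpotent_class_le G c \<longleftrightarrow> lower_central G c = {\<one>\<^bsub>G\<^esub>}"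

definition has_exponent :: "('a, 'b) monoid_scheme \<Rightarrow> nat \<Rightarrow> bool" where
  "has_exponent G n \<longleftrightarrow> (\<forall>x \<in> carrier G. x [^]\<^bsub>G\<^esub> n = \<one>\<^bsub>G\<^esub>)"

text \<open>For a presentation G = F/R: M = (R \<inter> F') / [F,R].\<close>
definition hopf_mult :: "('a, 'b) monoid_scheme \<Rightarrow> 'a set \<Rightarrow> ('a set) monoid" where
  "hopf_mult F R = (F\<lparr>carrier := R \<inter> derived F (carrier F)\<rparr>) Mod (comm_subgroup F (carrier F) R)"

definition schur_mult :: "('g, 'm) monoid_scheme \<Rightarrow> ((bool \<times> 'g) list set) set monoid" where
  "schur_mult G = hopf_mult (free_group (carrier G))
      (kernel (free_group (carrier G)) G (free_lift (carrier G) G (\<lambda>x. x)))"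

text \<open>F = free group on a = fg_gen True, b = fg_gen False.
  The relation subgroup of R(2,n;c) is the verbal subgroup generated by all n-th powers
  and gamma_(c+1)(F).\<close>
definition F2 :: "((bool \<times> bool) list set) monoid" where
  "F2 = free_group (UNIV :: bool set)"

definition R2nc_rel :: "nat \<Rightarrow> nat \<Rightarrow> (bool \<times> bool) list set set" where
  "R2nc_rel n c = generate F2 ({x [^]\<^bsub>F2\<^esub> n | x. x \<in> carrier F2} \<union> lower_central F2 c)"

definition gen_a :: "(bool \<times> bool) list set" where "gen_a = fg_gen True"
definition gen_b :: "(bool \<times> bool) list set" where "gen_b = fg_gen False"

definition hopf_word :: "nat \<Rightarrow> (bool \<times> bool) list set" where
  "hopf_word n = inv\<^bsub>F2\<^esub> (gen_b [^]\<^bsub>F2\<^esub> n) \<otimes>\<^bsub>F2\<^esub> inv\<^bsub>F2\<^esub> (gen_a [^]\<^bsub>F2\<^esub> n)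
       \<otimes>\<^bsub>F2\<^esub> ((gen_a \<otimes>\<^bsub>F2\<^esub> gen_b) [^]\<^bsub>F2\<^esub> n)"

definition e_nc :: "nat \<Rightarrow> nat \<Rightarrow> nat" where
  "e_nc n c = group.ord (hopf_mult F2 (R2nc_rel n c))
      (comm_subgroup F2 (carrier F2) (R2nc_rel n c) #>\<^bsub>F2\<^esub> hopf_word n)"

end

theory Submission
  imports Defs
begin

text \<open>Write \<open>G = F/K\<close> with \<open>F\<close> free on the elements of \<open>G\<close> and put \<open>N = [F, K]\<close>, so that
  \<open>M(G) = (K \<inter> F')/N\<close>. Since \<open>G\<close> has exponent \<open>n\<close> and class at most \<open>c\<close>, \<open>K\<close> contains all
  \<open>n\<close>-th powers and \<open>\<gamma>\<^sub>c\<^sub>+\<^sub>1(F)\<close>. Hence for all \<open>u, v \<in> F\<close> the homomorphism \<open>a \<mapsto> u, b \<mapsto> v\<close>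
  from the free group on \<open>a, b\<close> maps the relators of \<open>R(2,n;c)\<close> into \<open>K\<close> and their commutators
  with \<open>F\<close> into \<open>N\<close>; by definition of \<open>e = e\<^sub>n\<^sub>,\<^sub>c\<close> this puts \<open>(v\<^sup>-\<^sup>n u\<^sup>-\<^sup>n (uv)\<^sup>n)\<^sup>e\<close> into \<open>N\<close>.
  In \<open>Q = F/N\<close> the image of \<open>K\<close> is central, so \<open>n\<close>-th powers are central and
  \<open>(xy)\<^sup>n\<^sup>e = (x\<^sup>n y\<^sup>n (y\<^sup>-\<^sup>n x\<^sup>-\<^sup>n (xy)\<^sup>n))\<^sup>e = x\<^sup>n\<^sup>e y\<^sup>n\<^sup>e\<close>. Thus \<open>x \<mapsto> x\<^sup>n\<^sup>e\<close> is an endomorphism of \<open>Q\<close>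
  with central image; it kills every commutator, hence the image of \<open>F'\<close>, which contains \<open>M(G)\<close>.\<close>

subsection \<open>Free groups\<close>

abbreviation fg_equiv :: "(bool \<times> 'x) list \<Rightarrow> (bool \<times> 'x) list \<Rightarrow> bool" where
  "fg_equiv \<equiv> equivclp fg_red1"

lemma mem_fg_class: "v \<in> fg_class u \<longleftrightarrow> fg_equiv u v"
  by (simp add: fg_class_def)

lemma fg_class_eq_iff: "fg_class u = fg_class v \<longleftrightarrow> fg_equiv u v"
proof
  assume "fg_class u = fg_class v"
  then show "fg_equiv u v" by (metis mem_fg_class equivclp_refl)
next
  assume "fg_equiv u v"
  then have "fg_equiv u w \<longleftrightarrow> fg_equiv v w" for w
    by (blast intro: equivclp_trans equivclp_sym)
  then show "fg_class u = fg_class v"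
    unfolding fg_class_def by (intro arg_cong[where f=Collect] ext) simp
qed

lemma equivclp_map:
  assumes "\<And>a b. r a b \<Longrightarrow> r (g a) (g b)" and "equivclp r a b"
  shows "equivclp r (g a) (g b)"
  using assms(2) by (induction rule: equivclp_induct) (auto intro: equivclp_into_equivclp assms(1))

lemma fg_red1_append_context: "fg_red1 u v \<Longrightarrow> fg_red1 (p @ u @ q) (p @ v @ q)"
  unfolding fg_red1_def by (metis append.assoc)

lemma fg_equiv_append_context: "fg_equiv u v \<Longrightarrow> fg_equiv (p @ u @ q) (p @ v @ q)"
  by (rule equivclp_map[where g="\<lambda>w. p @ w @ q"]) (rule fg_red1_append_context)

lemma fg_equiv_append: "fg_equiv u u' \<Longrightarrow> fg_equiv v v' \<Longrightarrow> fg_equiv (u @ v) (u' @ v')"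
  using fg_equiv_append_context[of u u' "[]" v] fg_equiv_append_context[of v v' u' "[]"]
  by (auto intro: equivclp_trans)

definition fg_inv_word :: "(bool \<times> 'x) list \<Rightarrow> (bool \<times> 'x) list" where
  "fg_inv_word w = rev (map (\<lambda>(b, x). (\<not> b, x)) w)"

lemma fg_inv_word_inv_word [simp]: "fg_inv_word (fg_inv_word w) = w"
  by (induction w) (auto simp: fg_inv_word_def)

lemma fg_inv_word_letters [simp]: "snd ` set (fg_inv_word w) = snd ` set w"
  by (induction w) (auto simp: fg_inv_word_def)

lemma fg_equiv_append_inv_word: "fg_equiv (w @ fg_inv_word w) []"
proof (induction w)
  case Nil
  then show ?case by (simp add: fg_inv_word_def)
next
  case (Cons l w)
  obtain b x where l: "l = (b, x)" by (cases l)
  have "fg_equiv ((l # w) @ fg_inv_word (l # w)) ([l] @ [] @ [(\<not> b, x)])"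
    using fg_equiv_append_context[OF Cons.IH, of "[l]" "[(\<not> b, x)]"]
    by (simp add: fg_inv_word_def l)
  moreover have "fg_red1 ([l] @ [] @ [(\<not> b, x)]) []"
    unfolding fg_red1_def l by (rule exI[of _ "[]"], rule exI[of _ "[]"]) auto
  ultimately show ?case by (blast intro: equivclp_trans)
qed

lemma fg_mult: "fg_class u \<otimes>\<^bsub>free_group S\<^esub> fg_class v = fg_class (u @ v)"
proof -
  have "(SOME u'. u' \<in> fg_class u) \<in> fg_class u" "(SOME v'. v' \<in> fg_class v) \<in> fg_class v"
    by (metis mem_fg_class equivclp_refl someI)+
  then have "fg_equiv ((SOME u'. u' \<in> fg_class u) @ (SOME v'. v' \<in> fg_class v)) (u @ v)"
    unfolding mem_fg_class by (metis fg_equiv_append equivclp_sym)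
  then show ?thesis
    unfolding free_group_def by (simp add: fg_class_eq_iff)
qed

lemma fg_one: "\<one>\<^bsub>free_group S\<^esub> = fg_class []"
  by (simp add: free_group_def)

lemma fg_carrier: "carrier (free_group S) = {fg_class w | w. snd ` set w \<subseteq> S}"
  by (simp add: free_group_def)

lemma fg_class_mem_carrier: "snd ` set w \<subseteq> S \<Longrightarrow> fg_class w \<in> carrier (free_group S)"
  by (auto simp: fg_carrier)

lemma fg_gen_mem_carrier: "x \<in> S \<Longrightarrow> fg_gen x \<in> carrier (free_group S)"
  unfolding fg_gen_def by (rule fg_class_mem_carrier) auto

lemma free_group_is_group: "group (free_group S)"
proof (rule groupI)
  fix x y assume "x \<in> carrier (free_group S)" "y \<in> carrier (free_group S)"
  then obtain u v where "x = fg_class u" "snd ` set u \<subseteq> S" "y = fg_class v" "snd ` set v \<subseteq> S"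
    by (auto simp: fg_carrier)
  then show "x \<otimes>\<^bsub>free_group S\<^esub> y \<in> carrier (free_group S)"
    by (metis fg_mult fg_class_mem_carrier set_append image_Un Un_subset_iff)
next
  show "\<one>\<^bsub>free_group S\<^esub> \<in> carrier (free_group S)"
    unfolding fg_one by (rule fg_class_mem_carrier) simp
next
  fix x y z assume "x \<in> carrier (free_group S)" "y \<in> carrier (free_group S)" "z \<in> carrier (free_group S)"
  then obtain u v w where "x = fg_class u" "y = fg_class v" "z = fg_class w"
    by (auto simp: fg_carrier)
  then show "x \<otimes>\<^bsub>free_group S\<^esub> y \<otimes>\<^bsub>free_group S\<^esub> z = x \<otimes>\<^bsub>free_group S\<^esub> (y \<otimes>\<^bsub>free_group S\<^esub> z)"
    by (simp add: fg_mult)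
next
  fix x assume "x \<in> carrier (free_group S)"
  then obtain u where "x = fg_class u" by (auto simp: fg_carrier)
  then show "\<one>\<^bsub>free_group S\<^esub> \<otimes>\<^bsub>free_group S\<^esub> x = x"
    by (simp add: fg_mult fg_one)
next
  fix x assume "x \<in> carrier (free_group S)"
  then obtain w where w: "x = fg_class w" "snd ` set w \<subseteq> S" by (auto simp: fg_carrier)
  have "fg_class (fg_inv_word w) \<otimes>\<^bsub>free_group S\<^esub> x = \<one>\<^bsub>free_group S\<^esub>"
    unfolding w fg_mult fg_one fg_class_eq_iff
    using fg_equiv_append_inv_word[of "fg_inv_word w"] by simp
  moreover have "fg_class (fg_inv_word w) \<in> carrier (free_group S)"
    using w by (intro fg_class_mem_carrier) simp
  ultimately show "\<exists>y\<in>carrier (free_group S). y \<otimes>\<^bsub>free_group S\<^esub> x = \<one>\<^bsub>free_group S\<^esub>"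
    by blast
qed

lemma word_eval_Nil [simp]: "word_eval G f [] = \<one>\<^bsub>G\<^esub>"
  by (simp add: word_eval_def)

lemma word_eval_Cons [simp]:
  "word_eval G f ((b, x) # w) = (if b then f x else inv\<^bsub>G\<^esub> (f x)) \<otimes>\<^bsub>G\<^esub> word_eval G f w"
  by (simp add: word_eval_def)

context group
begin

lemma word_eval_closed:
  "(\<And>x. x \<in> snd ` set w \<Longrightarrow> f x \<in> carrier G) \<Longrightarrow> word_eval G f w \<in> carrier G"
  by (induction w) auto

lemma word_eval_append:
  assumes "\<And>x. x \<in> snd ` set (u @ v) \<Longrightarrow> f x \<in> carrier G"
  shows "word_eval G f (u @ v) = word_eval G f u \<otimes> word_eval G f v"
  using assms
proof (induction u)
  case Nil
  then show ?case using word_eval_closed[of v f] by auto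
next
  case (Cons l u)
  have "word_eval G f u \<in> carrier G" "word_eval G f v \<in> carrier G" "f (snd l) \<in> carrier G"
    using Cons.prems by (auto intro!: word_eval_closed)
  with Cons show ?case by (cases l) (auto simp: m_assoc)
qed

lemma word_eval_fg_equiv:
  assumes f: "\<And>x. f x \<in> carrier G" and "fg_equiv u v"
  shows "word_eval G f u = word_eval G f v"
proof -
  have "word_eval G f u = word_eval G f v" if "fg_red1 u v" for u v
  proof -
    obtain xs ys b x where u: "u = xs @ [(b, x), (\<not> b, x)] @ ys" and v: "v = xs @ ys"
      using \<open>fg_red1 u v\<close> unfolding fg_red1_def by blast
    have "word_eval G f ([(b, x), (\<not> b, x)] @ ys) = word_eval G f ys"
      using f[of x] word_eval_closed[of ys f, OF f] by (cases b) (auto simp: m_assoc[symmetric])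
    then show ?thesis unfolding u v using f by (simp add: word_eval_append)
  qed
  with \<open>fg_equiv u v\<close> show ?thesis
    by (induction rule: equivclp_induct) auto
qed

lemma free_lift_fg_class:
  assumes f: "f \<in> S \<rightarrow> carrier G" and w: "snd ` set w \<subseteq> S"
  shows "free_lift S G f (fg_class w) = word_eval G f w"
proof -
  define w' where "w' = (SOME w'. w' \<in> fg_class w \<and> snd ` set w' \<subseteq> S)"
  have "w' \<in> fg_class w \<and> snd ` set w' \<subseteq> S"
    unfolding w'_def by (rule someI[of _ w]) (simp add: mem_fg_class w)
  then have equiv: "fg_equiv w' w" and w': "snd ` set w' \<subseteq> S"
    by (auto simp: mem_fg_class intro: equivclp_sym)
  \<comment> \<open>\<open>word_eval_fg_equiv\<close> needs \<open>f\<close> to be total, so redefine it outside \<open>S\<close>.\<close>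
  define g where "g x = (if x \<in> S then f x else \<one>)" for x
  have restrict: "word_eval G g v = word_eval G f v" if "snd ` set v \<subseteq> S" for v
    using that by (induction v) (auto simp: g_def)
  have "g x \<in> carrier G" for x
    using f by (auto simp: g_def)
  then have "word_eval G f w' = word_eval G f w"
    using word_eval_fg_equiv[OF _ equiv] restrict[OF w'] restrict[OF w] by simp
  then show ?thesis unfolding free_lift_def w'_def[symmetric] .
qed

lemma free_lift_group_hom:
  assumes f: "f \<in> S \<rightarrow> carrier G"
  shows "group_hom (free_group S) G (free_lift S G f)"
proof -
  have closed: "\<And>w. snd ` set w \<subseteq> S \<Longrightarrow> word_eval G f w \<in> carrier G"
    using f by (auto intro!: word_eval_closed)
  have "free_lift S G f \<in> hom (free_group S) G"
  proof (rule homI)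
    fix A assume "A \<in> carrier (free_group S)"
    then show "free_lift S G f A \<in> carrier G"
      using closed by (auto simp: fg_carrier free_lift_fg_class[OF f])
  next
    fix A B assume "A \<in> carrier (free_group S)" "B \<in> carrier (free_group S)"
    then obtain u v where uv: "A = fg_class u" "B = fg_class v" and
      letters: "snd ` set u \<subseteq> S" "snd ` set v \<subseteq> S"
      by (auto simp: fg_carrier)
    then have "snd ` set (u @ v) \<subseteq> S" by auto
    moreover from this have "word_eval G f (u @ v) = word_eval G f u \<otimes> word_eval G f v"
      using f by (intro word_eval_append) (metis funcset_mem subsetD)
    ultimately show "free_lift S G f (A \<otimes>\<^bsub>free_group S\<^esub> B) = free_lift S G f A \<otimes> free_lift S G f B"
      unfolding uv fg_mult using f letters by (simp add: free_lift_fg_class)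
  qed
  then show ?thesis
    by (simp add: group_hom_def group_hom_axioms_def free_group_is_group is_group)
qed

lemma free_lift_fg_gen: "f \<in> S \<rightarrow> carrier G \<Longrightarrow> x \<in> S \<Longrightarrow> free_lift S G f (fg_gen x) = f x"
  using free_lift_fg_class[of f S "[(True, x)]"] by (auto simp: fg_gen_def dest: funcset_mem)

end


context group
begin

lemma conj_group_hom: "g \<in> carrier G \<Longrightarrow> group_hom G G (\<lambda>x. g \<otimes> x \<otimes> inv g)"
  by unfold_locales (auto intro!: homI simp: m_assoc, simp add: m_assoc[symmetric])

lemma commutator_mem_comm_subgroup:
  "h \<in> H \<Longrightarrow> k \<in> K \<Longrightarrow> h \<otimes> k \<otimes> inv h \<otimes> inv k \<in> comm_subgroup G H K"
  unfolding comm_subgroup_def by (rule generate.incl) blast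

lemma comm_subgroup_normal:
  assumes H: "H \<lhd> G" and K: "K \<lhd> G"
  shows "comm_subgroup G H K \<lhd> G"
  unfolding comm_subgroup_def
proof (rule normal_generateI)
  have "H \<subseteq> carrier G" "K \<subseteq> carrier G"
    using H K by (simp_all add: normal_imp_subgroup subgroup.subset)
  then show "(\<Union>h\<in>H. \<Union>k\<in>K. {h \<otimes> k \<otimes> inv h \<otimes> inv k}) \<subseteq> carrier G"
    by blast
next
  fix x g assume "x \<in> (\<Union>h\<in>H. \<Union>k\<in>K. {h \<otimes> k \<otimes> inv h \<otimes> inv k})" and g: "g \<in> carrier G"
  then obtain h k where hk: "h \<in> H" "k \<in> K" and x: "x = h \<otimes> k \<otimes> inv h \<otimes> inv k"
    by blast
  interpret conj: group_hom G G "\<lambda>x. g \<otimes> x \<otimes> inv g"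
    using g by (rule conj_group_hom)
  have "h \<in> carrier G" "k \<in> carrier G"
    using hk H K by (meson normal_imp_subgroup subgroup.mem_carrier)+
  then have "g \<otimes> x \<otimes> inv g =
      (g \<otimes> h \<otimes> inv g) \<otimes> (g \<otimes> k \<otimes> inv g) \<otimes> inv (g \<otimes> h \<otimes> inv g) \<otimes> inv (g \<otimes> k \<otimes> inv g)"
    unfolding x by (simp del: conj.hom_inv add: conj.hom_inv[symmetric])
  moreover have "g \<otimes> h \<otimes> inv g \<in> H" "g \<otimes> k \<otimes> inv g \<in> K"
    using hk g H K by (simp_all add: normal.inv_op_closed2)
  ultimately show "g \<otimes> x \<otimes> inv g \<in> (\<Union>h\<in>H. \<Union>k\<in>K. {h \<otimes> k \<otimes> inv h \<otimes> inv k})"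
    by blast
qed

lemma lower_central_normal: "lower_central G i \<lhd> G"
  by (induction i) (simp_all add: comm_subgroup_normal normal_self)

lemma lower_central_subset: "lower_central G i \<subseteq> carrier G"
  using lower_central_normal normal_imp_subgroup subgroup.subset by blast

end

lemma (in group_hom) comm_subgroup_image:
  assumes "A \<subseteq> carrier G" "B \<subseteq> carrier G" "h ` A \<subseteq> A'" "h ` B \<subseteq> B'"
  shows "h ` comm_subgroup G A B \<subseteq> comm_subgroup H A' B'"
proof -
  let ?C = "\<Union>a\<in>A. \<Union>b\<in>B. {a \<otimes>\<^bsub>G\<^esub> b \<otimes>\<^bsub>G\<^esub> inv\<^bsub>G\<^esub> a \<otimes>\<^bsub>G\<^esub> inv\<^bsub>G\<^esub> b}"
  let ?C' = "\<Union>a\<in>A'. \<Union>b\<in>B'. {a \<otimes>\<^bsub>H\<^esub> b \<otimes>\<^bsub>H\<^esub> inv\<^bsub>H\<^esub> a \<otimes>\<^bsub>H\<^esub> inv\<^bsub>H\<^esub> b}"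
  have "?C \<subseteq> carrier G"
    using assms(1,2) by blast
  moreover have "h ` ?C \<subseteq> ?C'"
  proof (rule image_subsetI)
    fix x assume "x \<in> ?C"
    then obtain a b where ab: "a \<in> A" "b \<in> B" and x: "x = a \<otimes>\<^bsub>G\<^esub> b \<otimes>\<^bsub>G\<^esub> inv\<^bsub>G\<^esub> a \<otimes>\<^bsub>G\<^esub> inv\<^bsub>G\<^esub> b"
      by blast
    moreover have "a \<in> carrier G" "b \<in> carrier G"
      using ab assms(1,2) by auto
    ultimately have "h x = h a \<otimes>\<^bsub>H\<^esub> h b \<otimes>\<^bsub>H\<^esub> inv\<^bsub>H\<^esub> h a \<otimes>\<^bsub>H\<^esub> inv\<^bsub>H\<^esub> h b"
      by simp
    moreover have "h a \<in> A'" "h b \<in> B'"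
      using ab assms(3,4) by auto
    ultimately show "h x \<in> ?C'" by blast
  qed
  ultimately show ?thesis
    unfolding comm_subgroup_def by (simp add: generate_img[symmetric] mono_generate)
qed

lemma (in group_hom) lower_central_image: "h ` lower_central G i \<subseteq> lower_central H i"
proof (induction i)
  case 0
  then show ?case by auto
next
  case (Suc i)
  have "h ` carrier G \<subseteq> carrier H"
    by (rule image_subsetI) simp
  then show ?case
    using comm_subgroup_image[OF G.lower_central_subset subset_refl Suc] by simp
qed


lemma (in group) comm_subgroup_subset_inter_derived:
  assumes R: "R \<lhd> G"
  shows "comm_subgroup G (carrier G) R \<subseteq> R \<inter> derived G (carrier G)"
proof -
  interpret R: normal R G by (rule R)
  have "comm_subgroup G (carrier G) R \<subseteq> R"
    unfolding comm_subgroup_def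
  proof (rule generate_subgroup_incl[OF _ R.subgroup_axioms], safe)
    fix g r assume "g \<in> carrier G" "r \<in> R"
    then show "g \<otimes> r \<otimes> inv g \<otimes> inv r \<in> R"
      by (simp add: R.inv_op_closed2 R.m_closed R.m_inv_closed)
  qed
  moreover have "comm_subgroup G (carrier G) R \<subseteq> derived G (carrier G)"
    unfolding comm_subgroup_def derived_def using R.subset by (intro mono_generate) blast
  ultimately show ?thesis by blast
qed

lemma (in group) hopf_mult_is_group:
  assumes R: "R \<lhd> G"
  shows "group (hopf_mult G R)"
proof -
  have "subgroup (R \<inter> derived G (carrier G)) G"
    using R by (simp add: normal_imp_subgroup subgroups_Inter_pair derived_is_subgroup)
  moreover have "comm_subgroup G (carrier G) R \<lhd> G"
    using R by (simp add: comm_subgroup_normal normal_self)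
  ultimately have "comm_subgroup G (carrier G) R \<lhd> G\<lparr>carrier := R \<inter> derived G (carrier G)\<rparr>"
    using comm_subgroup_subset_inter_derived[OF R] by (rule normal_restrict_supergroup)
  then show ?thesis
    unfolding hopf_mult_def by (rule normal.factorgroup_is_group)
qed

lemma pow_Mod_carrier_update:
  "Xs [^]\<^bsub>(F\<lparr>carrier := C\<rparr>) Mod N\<^esub> (k::nat) = Xs [^]\<^bsub>F Mod N\<^esub> k"
  by (induction k) (simp_all add: FactGroup_def set_mult_def)

lemma (in normal) rcos_pow:
  "a \<in> carrier G \<Longrightarrow> (H #> a) [^]\<^bsub>G Mod H\<^esub> (k::nat) = H #> (a [^] k)"
  by (induction k) (simp_all add: FactGroup_def coset_mult_one subset rcos_sum)

lemma (in group) pow_ord_hopf_mult_mem: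
  assumes R: "R \<lhd> G" and w: "w \<in> carrier G"
  shows "w [^] group.ord (hopf_mult G R) (comm_subgroup G (carrier G) R #> w)
    \<in> comm_subgroup G (carrier G) R"
proof -
  define N where "N = comm_subgroup G (carrier G) R"
  interpret N: normal N G
    unfolding N_def using R by (simp add: comm_subgroup_normal normal_self)
  interpret Q: group "G Mod N" by (rule N.factorgroup_is_group)
  have "group.ord (hopf_mult G R) (N #> w) = Q.ord (N #> w)"
    unfolding group.ord_def[OF hopf_mult_is_group[OF R]] Q.ord_def
    unfolding hopf_mult_def N_def[symmetric] pow_Mod_carrier_update
    by (simp add: FactGroup_def)
  moreover have "N #> w \<in> carrier (G Mod N)"
    using w by (auto simp: FactGroup_def RCOSETS_def)
  ultimately have "(N #> w) [^]\<^bsub>G Mod N\<^esub> group.ord (hopf_mult G R) (N #> w) = \<one>\<^bsub>G Mod N\<^esub>"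
    using Q.pow_ord_eq_1 by simp
  then have "N #> (w [^] group.ord (hopf_mult G R) (N #> w)) = N"
    unfolding N.rcos_pow[OF w] by (simp add: FactGroup_def)
  then show ?thesis
    using coset_join1 w N.subgroup_axioms unfolding N_def by blast
qed

definition center :: "('a, 'b) monoid_scheme \<Rightarrow> 'a set" where
  "center G = {z \<in> carrier G. \<forall>g \<in> carrier G. z \<otimes>\<^bsub>G\<^esub> g = g \<otimes>\<^bsub>G\<^esub> z}"

lemma (in group) center_is_subgroup: "subgroup (center G) G"
proof (rule subgroupI)
  fix z assume "z \<in> center G"
  then have z: "z \<in> carrier G" and comm: "\<And>g. g \<in> carrier G \<Longrightarrow> z \<otimes> g = g \<otimes> z"
    by (auto simp: center_def)
  have "inv z \<otimes> g = g \<otimes> inv z" if g: "g \<in> carrier G" for g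
  proof -
    have "inv z \<otimes> g = inv z \<otimes> (g \<otimes> z) \<otimes> inv z"
      using z g by (simp add: m_assoc)
    also have "\<dots> = g \<otimes> inv z"
      using z g by (simp add: comm[OF g, symmetric] m_assoc[symmetric])
    finally show ?thesis .
  qed
  with z show "inv z \<in> center G"
    by (simp add: center_def)
next
  fix y z assume "y \<in> center G" "z \<in> center G"
  then have yz: "y \<in> carrier G" "z \<in> carrier G"
    and comm: "\<And>g. g \<in> carrier G \<Longrightarrow> y \<otimes> g = g \<otimes> y" "\<And>g. g \<in> carrier G \<Longrightarrow> z \<otimes> g = g \<otimes> z"
    by (auto simp: center_def)
  have "y \<otimes> z \<otimes> g = g \<otimes> (y \<otimes> z)" if g: "g \<in> carrier G" for g
  proof -
    have "y \<otimes> z \<otimes> g = y \<otimes> (g \<otimes> z)"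
      using yz g by (simp add: m_assoc comm(2)[OF g])
    also have "\<dots> = g \<otimes> (y \<otimes> z)"
      using yz g by (simp add: m_assoc[symmetric] comm(1)[OF g])
    finally show ?thesis .
  qed
  with yz show "y \<otimes> z \<in> center G"
    by (simp add: center_def)
qed (auto simp: center_def)

lemma center_commute: "z \<in> center G \<Longrightarrow> g \<in> carrier G \<Longrightarrow> z \<otimes>\<^bsub>G\<^esub> g = g \<otimes>\<^bsub>G\<^esub> z"
  by (simp add: center_def)

lemma (in group) rcos_mem_center_Mod_comm_subgroup:
  assumes K: "K \<lhd> G" and k: "k \<in> K"
  shows "comm_subgroup G (carrier G) K #> k \<in> center (G Mod comm_subgroup G (carrier G) K)"
proof -
  define N where "N = comm_subgroup G (carrier G) K"
  interpret N: normal N G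
    unfolding N_def using K by (simp add: comm_subgroup_normal normal_self)
  have k_carrier: "k \<in> carrier G"
    using K k by (meson normal_imp_subgroup subgroup.mem_carrier)
  have "N #> (k \<otimes> g) = N #> (g \<otimes> k)" if g: "g \<in> carrier G" for g
  proof -
    have "(g \<otimes> k) \<otimes> inv (k \<otimes> g) = g \<otimes> k \<otimes> inv g \<otimes> inv k"
      using g k_carrier by (simp add: inv_mult_group m_assoc)
    also have "\<dots> \<in> N"
      unfolding N_def using g k by (rule commutator_mem_comm_subgroup)
    finally have "g \<otimes> k \<in> N #> (k \<otimes> g)"
      using N.rcos_module[OF is_group] g k_carrier by simp
    then show ?thesis
      using repr_independence N.subgroup_axioms g k_carrier by simp
  qed
  then have "(N #> k) <#> C = C <#> (N #> k)" if "C \<in> carrier (G Mod N)" for C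
    using that k_carrier by (auto simp: FactGroup_def RCOSETS_def N.rcos_sum)
  moreover have "N #> k \<in> carrier (G Mod N)"
    using k_carrier by (auto simp: FactGroup_def RCOSETS_def)
  ultimately show ?thesis
    unfolding N_def[symmetric] center_def by (simp add: FactGroup_def)
qed


subsection \<open>Power maps with central values\<close>

definition power_defect :: "('a, 'b) monoid_scheme \<Rightarrow> nat \<Rightarrow> 'a \<Rightarrow> 'a \<Rightarrow> 'a" where
  "power_defect G n x y =
     inv\<^bsub>G\<^esub> (y [^]\<^bsub>G\<^esub> n) \<otimes>\<^bsub>G\<^esub> inv\<^bsub>G\<^esub> (x [^]\<^bsub>G\<^esub> n) \<otimes>\<^bsub>G\<^esub> (x \<otimes>\<^bsub>G\<^esub> y) [^]\<^bsub>G\<^esub> n"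

lemma (in group_hom) power_defect_image:
  "x \<in> carrier G \<Longrightarrow> y \<in> carrier G \<Longrightarrow> h (power_defect G n x y) = power_defect H n (h x) (h y)"
  by (simp add: power_defect_def hom_nat_pow)

lemma (in group_hom) derived_subset_kernel:
  assumes comm: "\<And>x y. x \<in> carrier G \<Longrightarrow> y \<in> carrier G \<Longrightarrow> h x \<otimes>\<^bsub>H\<^esub> h y = h y \<otimes>\<^bsub>H\<^esub> h x"
  shows "derived G (carrier G) \<subseteq> kernel G H h"
  unfolding derived_def
proof (rule G.generate_subgroup_incl[OF _ subgroup_kernel], safe)
  fix x y assume x: "x \<in> carrier G" and y: "y \<in> carrier G"
  have "h (x \<otimes>\<^bsub>G\<^esub> y \<otimes>\<^bsub>G\<^esub> inv\<^bsub>G\<^esub> x \<otimes>\<^bsub>G\<^esub> inv\<^bsub>G\<^esub> y)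
      = h y \<otimes>\<^bsub>H\<^esub> h x \<otimes>\<^bsub>H\<^esub> inv\<^bsub>H\<^esub> h x \<otimes>\<^bsub>H\<^esub> inv\<^bsub>H\<^esub> h y"
    using x y by (simp add: comm)
  also have "\<dots> = \<one>\<^bsub>H\<^esub>"
    using x y by (simp add: H.m_assoc)
  finally show "x \<otimes>\<^bsub>G\<^esub> y \<otimes>\<^bsub>G\<^esub> inv\<^bsub>G\<^esub> x \<otimes>\<^bsub>G\<^esub> inv\<^bsub>G\<^esub> y \<in> kernel G H h"
    using x y by (simp add: kernel_def)
qed

context group
begin

lemma pow_mult_distrib_of_central_powers:
  assumes central: "\<And>x. x \<in> carrier G \<Longrightarrow> x [^] n \<in> center G"
    and defect: "\<And>x y. x \<in> carrier G \<Longrightarrow> y \<in> carrier G \<Longrightarrow> power_defect G n x y [^] e = \<one>"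
    and x: "x \<in> carrier G" and y: "y \<in> carrier G"
  shows "(x \<otimes> y) [^] (n * e) = x [^] (n * e) \<otimes> y [^] (n * e)"
proof -
  interpret Z: subgroup "center G" G by (rule center_is_subgroup)
  define a b f where "a = x [^] n" and "b = y [^] n" and "f = power_defect G n x y"
  have central_abf: "a \<in> center G" "b \<in> center G" "f \<in> center G"
    unfolding a_def b_def f_def power_defect_def using x y central by simp_all
  then have carrier_abf: "a \<in> carrier G" "b \<in> carrier G" "f \<in> carrier G"
    by auto
  have "(x \<otimes> y) [^] n = a \<otimes> b \<otimes> f"
    using x y carrier_abf unfolding a_def b_def f_def power_defect_def
    by (simp add: m_assoc[symmetric] inv_mult_group[symmetric])
  then have "(x \<otimes> y) [^] (n * e) = (a \<otimes> b \<otimes> f) [^] e"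
    using x y by (simp add: nat_pow_pow[symmetric])
  also have "\<dots> = (a \<otimes> b) [^] e \<otimes> f [^] e"
    using carrier_abf center_commute[OF central_abf(3), of "a \<otimes> b"]
    by (intro pow_mult_distrib) simp_all
  also have "\<dots> = a [^] e \<otimes> b [^] e"
    using carrier_abf defect[OF x y]
      pow_mult_distrib[OF center_commute[OF central_abf(1) carrier_abf(2)] carrier_abf(1,2)]
    by (simp add: f_def)
  also have "\<dots> = x [^] (n * e) \<otimes> y [^] (n * e)"
    unfolding a_def b_def using x y by (simp add: nat_pow_pow)
  finally show ?thesis .
qed

lemma derived_pow_eq_one_of_central_powers:
  assumes central: "\<And>x. x \<in> carrier G \<Longrightarrow> x [^] n \<in> center G"
    and defect: "\<And>x y. x \<in> carrier G \<Longrightarrow> y \<in> carrier G \<Longrightarrow> power_defect G n x y [^] e = \<one>"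
    and r: "r \<in> derived G (carrier G)"
  shows "r [^] (n * e) = \<one>"
proof -
  interpret power: group_hom G G "\<lambda>x. x [^] (n * e)"
    by unfold_locales (auto intro!: homI simp: pow_mult_distrib_of_central_powers[OF central defect])
  have "x [^] (n * e) \<in> center G" if "x \<in> carrier G" for x
    using subgroup_int_pow_closed[OF center_is_subgroup central[OF that], of "int e"] that
    by (simp add: int_pow_int nat_pow_pow)
  then have "derived G (carrier G) \<subseteq> kernel G G (\<lambda>x. x [^] (n * e))"
    by (intro power.derived_subset_kernel center_commute) simp_all
  then show ?thesis
    using r by (auto simp: kernel_def)
qed

end


subsection \<open>Transfer from \<open>R(2,n;c)\<close>\<close>

lemma F2_is_group: "group F2"
  unfolding F2_def by (rule free_group_is_group)

lemma gen_a_mem_carrier: "gen_a \<in> carrier F2"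
  unfolding gen_a_def F2_def by (rule fg_gen_mem_carrier) simp

lemma gen_b_mem_carrier: "gen_b \<in> carrier F2"
  unfolding gen_b_def F2_def by (rule fg_gen_mem_carrier) simp

lemma hopf_word_eq_power_defect: "hopf_word n = power_defect F2 n gen_a gen_b"
  by (simp add: hopf_word_def power_defect_def)

lemma R2nc_rel_normal: "R2nc_rel n c \<lhd> F2"
proof -
  interpret F2: group F2 by (rule F2_is_group)
  show ?thesis
    unfolding R2nc_rel_def
  proof (rule F2.normal_generateI)
    show "{x [^]\<^bsub>F2\<^esub> n | x. x \<in> carrier F2} \<union> lower_central F2 c \<subseteq> carrier F2"
      using F2.lower_central_subset by auto
  next
    fix x g assume x: "x \<in> {x [^]\<^bsub>F2\<^esub> n | x. x \<in> carrier F2} \<union> lower_central F2 c"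
      and g: "g \<in> carrier F2"
    interpret conj: group_hom F2 F2 "\<lambda>x. g \<otimes>\<^bsub>F2\<^esub> x \<otimes>\<^bsub>F2\<^esub> inv\<^bsub>F2\<^esub> g"
      using g by (rule F2.conj_group_hom)
    show "g \<otimes>\<^bsub>F2\<^esub> x \<otimes>\<^bsub>F2\<^esub> inv\<^bsub>F2\<^esub> g \<in> {x [^]\<^bsub>F2\<^esub> n | x. x \<in> carrier F2} \<union> lower_central F2 c"
      using x conj.hom_nat_pow g normal.inv_op_closed2[OF F2.lower_central_normal] by auto
  qed
qed

lemma (in group) power_defect_pow_e_nc_mem:
  assumes K: "K \<lhd> G" and pow: "\<And>x. x \<in> carrier G \<Longrightarrow> x [^] n \<in> K"
    and lower_central: "lower_central G c \<subseteq> K"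
    and u: "u \<in> carrier G" and v: "v \<in> carrier G"
  shows "power_defect G n u v [^] e_nc n c \<in> comm_subgroup G (carrier G) K"
proof -
  interpret F2: group F2 by (rule F2_is_group)
  define \<phi> where "\<phi> = free_lift UNIV G (\<lambda>b. if b then u else v)"
  interpret \<phi>: group_hom F2 G \<phi>
    unfolding \<phi>_def F2_def using u v by (intro free_lift_group_hom) auto
  have hopf_word: "hopf_word n \<in> carrier F2"
    using gen_a_mem_carrier gen_b_mem_carrier by (simp add: hopf_word_def)
  have "\<phi> gen_a = u" "\<phi> gen_b = v"
    unfolding \<phi>_def gen_a_def gen_b_def using u v by (simp_all add: free_lift_fg_gen)
  then have image: "\<phi> (hopf_word n [^]\<^bsub>F2\<^esub> e_nc n c) = power_defect G n u v [^] e_nc n c"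
    unfolding \<phi>.hom_nat_pow[OF hopf_word] unfolding hopf_word_eq_power_defect
    using gen_a_mem_carrier gen_b_mem_carrier by (simp add: \<phi>.power_defect_image)
  have "\<phi> ` R2nc_rel n c \<subseteq> K"
  proof -
    let ?S = "{x [^]\<^bsub>F2\<^esub> n | x. x \<in> carrier F2} \<union> lower_central F2 c"
    have S: "?S \<subseteq> carrier F2"
      using F2.lower_central_subset by auto
    have "\<phi> ` ?S \<subseteq> K"
      using pow \<phi>.lower_central_image lower_central by (auto simp: \<phi>.hom_nat_pow)
    then show ?thesis
      unfolding R2nc_rel_def \<phi>.generate_img[OF S, symmetric]
      using K by (intro generate_subgroup_incl normal_imp_subgroup)
  qed
  moreover have "R2nc_rel n c \<subseteq> carrier F2"
    by (meson R2nc_rel_normal normal_imp_subgroup subgroup.subset)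
  ultimately have "\<phi> ` comm_subgroup F2 (carrier F2) (R2nc_rel n c) \<subseteq> comm_subgroup G (carrier G) K"
    by (intro \<phi>.comm_subgroup_image) auto
  moreover have "hopf_word n [^]\<^bsub>F2\<^esub> e_nc n c \<in> comm_subgroup F2 (carrier F2) (R2nc_rel n c)"
    unfolding e_nc_def by (rule F2.pow_ord_hopf_mult_mem[OF R2nc_rel_normal hopf_word])
  ultimately show ?thesis
    using image by (metis image_eqI subsetD)
qed

lemma (in group) derived_pow_mem_comm_subgroup:
  assumes K: "K \<lhd> G" and pow: "\<And>x. x \<in> carrier G \<Longrightarrow> x [^] n \<in> K"
    and lower_central: "lower_central G c \<subseteq> K"
    and r: "r \<in> derived G (carrier G)"
  shows "r [^] (n * e_nc n c) \<in> comm_subgroup G (carrier G) K"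
proof -
  define N where "N = comm_subgroup G (carrier G) K"
  interpret N: normal N G
    unfolding N_def using K by (simp add: comm_subgroup_normal normal_self)
  interpret Q: group "G Mod N" by (rule N.factorgroup_is_group)
  interpret \<pi>: group_hom G "G Mod N" "\<lambda>a. N #> a"
    by unfold_locales (rule N.r_coset_hom_Mod)
  have onto: "(\<lambda>a. N #> a) ` carrier G = carrier (G Mod N)"
    by (auto simp: FactGroup_def RCOSETS_def)
  have "p [^]\<^bsub>G Mod N\<^esub> n \<in> center (G Mod N)" if p: "p \<in> carrier (G Mod N)" for p
  proof -
    obtain u where u: "u \<in> carrier G" and "p = N #> u"
      using p by (auto simp: FactGroup_def RCOSETS_def)
    then have "p [^]\<^bsub>G Mod N\<^esub> n = N #> (u [^] n)"
      by (simp add: \<pi>.hom_nat_pow)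
    then show ?thesis
      using rcos_mem_center_Mod_comm_subgroup[OF K pow[OF u]] unfolding N_def by simp
  qed
  moreover have "power_defect (G Mod N) n p q [^]\<^bsub>G Mod N\<^esub> e_nc n c = \<one>\<^bsub>G Mod N\<^esub>"
    if pq: "p \<in> carrier (G Mod N)" "q \<in> carrier (G Mod N)" for p q
  proof -
    obtain u v where uv: "u \<in> carrier G" "v \<in> carrier G" and "p = N #> u" "q = N #> v"
      using pq by (auto simp: FactGroup_def RCOSETS_def)
    then have "power_defect (G Mod N) n p q [^]\<^bsub>G Mod N\<^esub> e_nc n c
        = N #> (power_defect G n u v [^] e_nc n c)"
      by (simp add: \<pi>.power_defect_image \<pi>.hom_nat_pow power_defect_def)
    also have "\<dots> = N"
      using power_defect_pow_e_nc_mem[OF K pow lower_central uv] uv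
      by (intro coset_join2 N.subgroup_axioms) (simp_all add: N_def power_defect_def)
    finally show ?thesis
      by (simp add: FactGroup_def)
  qed
  moreover have "N #> r \<in> derived (G Mod N) (carrier (G Mod N))"
    using r \<pi>.derived_img[OF subset_refl] onto by auto
  ultimately have "(N #> r) [^]\<^bsub>G Mod N\<^esub> (n * e_nc n c) = \<one>\<^bsub>G Mod N\<^esub>"
    by (rule Q.derived_pow_eq_one_of_central_powers)
  moreover have r_carrier: "r \<in> carrier G"
    using r derived_in_carrier[OF subset_refl] by blast
  ultimately have "N #> (r [^] (n * e_nc n c)) = N"
    using \<pi>.hom_nat_pow[OF r_carrier] by (simp add: FactGroup_def)
  then show ?thesis
    unfolding N_def[symmetric] using r_carrier by (rule coset_join1[OF _ nat_pow_closed N.subgroup_axioms])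
qed


lemma (in group) hopf_mult_pow_e_nc_eq_one:
  assumes R: "R \<lhd> G" and pow: "\<And>x. x \<in> carrier G \<Longrightarrow> x [^] n \<in> R"
    and lower_central: "lower_central G c \<subseteq> R"
    and Y: "Y \<in> carrier (hopf_mult G R)"
  shows "Y [^]\<^bsub>hopf_mult G R\<^esub> (n * e_nc n c) = \<one>\<^bsub>hopf_mult G R\<^esub>"
proof -
  define N where "N = comm_subgroup G (carrier G) R"
  interpret N: normal N G
    unfolding N_def using R by (simp add: comm_subgroup_normal normal_self)
  obtain r where r: "r \<in> R \<inter> derived G (carrier G)" and Y: "Y = N #> r"
    using Y by (auto simp: hopf_mult_def N_def FactGroup_def RCOSETS_def)
  then have r_carrier: "r \<in> carrier G"
    using derived_in_carrier by blast
  have "N #> (r [^] (n * e_nc n c)) = N"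
    using derived_pow_mem_comm_subgroup[OF R pow lower_central] r r_carrier
    by (intro coset_join2 N.subgroup_axioms) (auto simp: N_def)
  then show ?thesis
    unfolding hopf_mult_def N_def[symmetric] pow_Mod_carrier_update Y N.rcos_pow[OF r_carrier]
    by (simp add: FactGroup_def)
qed

theorem theorem2:
  fixes G :: "('g, 'm) monoid_scheme" and n c :: nat
  assumes "n \<ge> 2" and "c \<ge> 1"
    and "group G" and "finite (carrier G)"
    and "has_exponent G n" and "nilpotent_class_le G c"
  shows "\<forall>x \<in> carrier (schur_mult G). x [^]\<^bsub>schur_mult G\<^esub> (n * e_nc n c) = \<one>\<^bsub>schur_mult G\<^esub>"
proof -
  interpret G: group G by fact
  define F where "F = free_group (carrier G)"
  define h where "h = free_lift (carrier G) G (\<lambda>x. x)"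
  interpret F: group F
    unfolding F_def by (rule free_group_is_group)
  interpret h: group_hom F G h
    unfolding F_def h_def by (rule G.free_lift_group_hom) simp
  have "x [^]\<^bsub>F\<^esub> n \<in> kernel F G h" if "x \<in> carrier F" for x
    using that \<open>has_exponent G n\<close> by (simp add: kernel_def has_exponent_def h.hom_nat_pow)
  moreover have "lower_central F c \<subseteq> kernel F G h"
    using h.lower_central_image[of c] \<open>nilpotent_class_le G c\<close> F.lower_central_subset
    by (auto simp: kernel_def nilpotent_class_le_def)
  ultimately show ?thesis
    unfolding schur_mult_def F_def[symmetric] h_def[symmetric]
    using F.hopf_mult_pow_e_nc_eq_one[OF h.normal_kernel] by blast
qed

end
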